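(* Let $S$ be a nontrivial subdirectly irreducible member of $\mathsf V(S_7)$. Then $S$ is a flat semiring with zero $0$, it has a least multiplicative ideal $I$ among the ideals different from $\{0\}$, and: $I$ has exactly two elements; $E(S)$ has at most two elements; if $|E(S)|=1$ then $S\in\mathbf N$; and if $|E(S)|=2$ then either $S$ is isomorphic to $M_2$ or $S$ contains a subsemiring isomorphic to $S_7$.
   Context: A flat semiring is an ai-semiring (semilattice $(S,+)$, semigroup $(S,\cdot)$, distributive laws) whose multiplicative reduct has a zero element $0$ and in which $x+y=0$ for all distinct $x,y$. $S_7$ is the ai-semiring on $\{\infty,a,1\}$ with $x+x=x$, $x+y=\infty$ for $x\neq y$, and commutative multiplication with $\infty$ a zero, $a\cdot a=\infty$, $a\cdot 1=a$, $1\cdot1=1$; $\mathsf V(S_7)$ is the variety it generates. $M_2$ is the two-element flat semiring $\{1,0\}$ with $1\cdot1=1$. $E(S)$ denotes the set of multiplicative idempotents of $S$. $\mathbf N$ denotes the subvariety of $\mathsf V(S_7)$ defined by the identity $x^2y\approx x^2$. A multiplicative ideal is a subset $J$ with $SJ\cup JS\subseteq J$. *)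

theory Defs
  imports Main
begin

definition ai_semiring :: "('a \<Rightarrow> 'a \<Rightarrow> 'a) \<Rightarrow> ('a \<Rightarrow> 'a \<Rightarrow> 'a) \<Rightarrow> bool" where
  "ai_semiring add mul \<longleftrightarrow>
     (\<forall>x y z. add (add x y) z = add x (add y z)) \<and>
     (\<forall>x y. add x y = add y x) \<and>
     (\<forall>x. add x x = x) \<and>
     (\<forall>x y z. mul (mul x y) z = mul x (mul y z)) \<and>
     (\<forall>x y z. mul x (add y z) = add (mul x y) (mul x z)) \<and>
     (\<forall>x y z. mul (add x y) z = add (mul x z) (mul y z))"

definition mult_zero :: "('a \<Rightarrow> 'a \<Rightarrow> 'a) \<Rightarrow> 'a \<Rightarrow> bool" where
  "mult_zero mul z \<longleftrightarrow> (\<forall>x. mul z x = z \<and> mul x z = z)"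

definition flat_semiring :: "('a \<Rightarrow> 'a \<Rightarrow> 'a) \<Rightarrow> ('a \<Rightarrow> 'a \<Rightarrow> 'a) \<Rightarrow> 'a \<Rightarrow> bool" where
  "flat_semiring add mul z \<longleftrightarrow>
     ai_semiring add mul \<and> mult_zero mul z \<and> (\<forall>x y. x \<noteq> y \<longrightarrow> add x y = z)"

definition mult_ideal :: "('a \<Rightarrow> 'a \<Rightarrow> 'a) \<Rightarrow> 'a set \<Rightarrow> bool" where
  "mult_ideal mul J \<longleftrightarrow> J \<noteq> {} \<and> (\<forall>s j. j \<in> J \<longrightarrow> mul s j \<in> J \<and> mul j s \<in> J)"

definition idempotents :: "('a \<Rightarrow> 'a \<Rightarrow> 'a) \<Rightarrow> 'a set" where
  "idempotents mul = {x. mul x x = x}"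

definition congruence :: "('a \<Rightarrow> 'a \<Rightarrow> 'a) \<Rightarrow> ('a \<Rightarrow> 'a \<Rightarrow> 'a) \<Rightarrow> ('a \<times> 'a) set \<Rightarrow> bool" where
  "congruence add mul R \<longleftrightarrow> equiv UNIV R \<and>
     (\<forall>a b c d. (a, b) \<in> R \<longrightarrow> (c, d) \<in> R \<longrightarrow>
        (add a c, add b d) \<in> R \<and> (mul a c, mul b d) \<in> R)"

definition subdirectly_irreducible :: "('a \<Rightarrow> 'a \<Rightarrow> 'a) \<Rightarrow> ('a \<Rightarrow> 'a \<Rightarrow> 'a) \<Rightarrow> bool" where
  "subdirectly_irreducible add mul \<longleftrightarrow>
     (\<exists>x y :: 'a. x \<noteq> y) \<and>
     (\<exists>M. congruence add mul M \<and> M \<noteq> Id \<and>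
          (\<forall>R. congruence add mul R \<and> R \<noteq> Id \<longrightarrow> M \<subseteq> R))"

datatype 'v trm = Var 'v | TAdd "'v trm" "'v trm" | TMul "'v trm" "'v trm"

fun eval :: "('a \<Rightarrow> 'a \<Rightarrow> 'a) \<Rightarrow> ('a \<Rightarrow> 'a \<Rightarrow> 'a) \<Rightarrow> ('v \<Rightarrow> 'a) \<Rightarrow> 'v trm \<Rightarrow> 'a" where
  "eval add mul \<rho> (Var v) = \<rho> v"
| "eval add mul \<rho> (TAdd t u) = add (eval add mul \<rho> t) (eval add mul \<rho> u)"
| "eval add mul \<rho> (TMul t u) = mul (eval add mul \<rho> t) (eval add mul \<rho> u)"

definition satisfies :: "('a \<Rightarrow> 'a \<Rightarrow> 'a) \<Rightarrow> ('a \<Rightarrow> 'a \<Rightarrow> 'a) \<Rightarrow> nat trm \<Rightarrow> nat trm \<Rightarrow> bool" where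
  "satisfies add mul t u \<longleftrightarrow> (\<forall>\<rho>. eval add mul \<rho> t = eval add mul \<rho> u)"

datatype s7 = Infty | A | One

definition add7 :: "s7 \<Rightarrow> s7 \<Rightarrow> s7" where
  "add7 x y = (if x = y then x else Infty)"

fun mul7 :: "s7 \<Rightarrow> s7 \<Rightarrow> s7" where
  "mul7 Infty y = Infty"
| "mul7 x Infty = Infty"
| "mul7 A A = Infty"
| "mul7 A One = A"
| "mul7 One A = A"
| "mul7 One One = One"

text \<open>Membership in V(S_7), via Birkhoff: satisfies every identity of S_7.\<close>
definition in_V_S7 :: "('a \<Rightarrow> 'a \<Rightarrow> 'a) \<Rightarrow> ('a \<Rightarrow> 'a \<Rightarrow> 'a) \<Rightarrow> bool" where
  "in_V_S7 add mul \<longleftrightarrow> ai_semiring add mul \<and>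
     (\<forall>t u. satisfies add7 mul7 t u \<longrightarrow> satisfies add mul t u)"

definition in_N :: "('a \<Rightarrow> 'a \<Rightarrow> 'a) \<Rightarrow> ('a \<Rightarrow> 'a \<Rightarrow> 'a) \<Rightarrow> bool" where
  "in_N add mul \<longleftrightarrow> in_V_S7 add mul \<and> (\<forall>x y. mul (mul x x) y = mul x x)"

text \<open>M_2 on bool: True = 1, False = 0.\<close>
definition addM2 :: "bool \<Rightarrow> bool \<Rightarrow> bool" where
  "addM2 x y = (if x = y then x else False)"

definition mulM2 :: "bool \<Rightarrow> bool \<Rightarrow> bool" where
  "mulM2 x y = (x \<and> y)"

definition is_hom :: "('a \<Rightarrow> 'a \<Rightarrow> 'a) \<Rightarrow> ('a \<Rightarrow> 'a \<Rightarrow> 'a) \<Rightarrow>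
    ('b \<Rightarrow> 'b \<Rightarrow> 'b) \<Rightarrow> ('b \<Rightarrow> 'b \<Rightarrow> 'b) \<Rightarrow> ('a \<Rightarrow> 'b) \<Rightarrow> bool" where
  "is_hom add mul add' mul' f \<longleftrightarrow>
     (\<forall>x y. f (add x y) = add' (f x) (f y) \<and> f (mul x y) = mul' (f x) (f y))"

definition isomorphic :: "('a \<Rightarrow> 'a \<Rightarrow> 'a) \<Rightarrow> ('a \<Rightarrow> 'a \<Rightarrow> 'a) \<Rightarrow>
    ('b \<Rightarrow> 'b \<Rightarrow> 'b) \<Rightarrow> ('b \<Rightarrow> 'b \<Rightarrow> 'b) \<Rightarrow> bool" where
  "isomorphic add mul add' mul' \<longleftrightarrow> (\<exists>f. bij f \<and> is_hom add mul add' mul' f)"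

definition subsemiring :: "('a \<Rightarrow> 'a \<Rightarrow> 'a) \<Rightarrow> ('a \<Rightarrow> 'a \<Rightarrow> 'a) \<Rightarrow> 'a set \<Rightarrow> bool" where
  "subsemiring add mul T \<longleftrightarrow> T \<noteq> {} \<and> (\<forall>x\<in>T. \<forall>y\<in>T. add x y \<in> T \<and> mul x y \<in> T)"

definition has_sub_S7 :: "('a \<Rightarrow> 'a \<Rightarrow> 'a) \<Rightarrow> ('a \<Rightarrow> 'a \<Rightarrow> 'a) \<Rightarrow> bool" where
  "has_sub_S7 add mul \<longleftrightarrow> (\<exists>T f. subsemiring add mul T \<and> bij_betw f (UNIV :: s7 set) T \<and>
       (\<forall>x y. f (add7 x y) = add (f x) (f y) \<and> f (mul7 x y) = mul (f x) (f y)))"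

end

theory Submission
  imports Defs
begin

text \<open>For an element c of S let x ~_c y mean that f(x) \<le> c \<longleftrightarrow> f(y) \<le> c for each of the
  unary polynomials f(x) = x, px, x^2, px^2, where u \<le> v means u + v = v. An identity of S_7
  says that f(x + y) \<le> c and g(x) \<le> c force g(y) \<le> c; hence ~_c is a congruence, and it
  identifies x and y as soon as some f(x + y) lies below c. In a subdirectly irreducible S
  some ~_c is the identity. Then there is exactly one element z with no f(z) below c, every
  sum of distinct elements equals z, and z is a multiplicative zero: S is flat. Every
  nonzero element is c or has a multiple equal to c, so {z, c} is the least nonzero ideal.
  Finally the S_7-identity (x + xy)xy = (xy)^2 shows that a nonzero idempotent e is the
  only divisor of itself, so there is at most one, and it fixes c: either e = c and
  S = {z, c} \<cong> M_2, or {z, c, e} is a copy of S_7.\<close>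

datatype unary_shape = Ident | Scale | Square | Scale_square

fun unary_poly :: "('a \<Rightarrow> 'a \<Rightarrow> 'a) \<Rightarrow> unary_shape \<Rightarrow> 'a \<Rightarrow> 'a \<Rightarrow> 'a" where
  "unary_poly mul Ident p x = x"
| "unary_poly mul Scale p x = mul p x"
| "unary_poly mul Square p x = mul x x"
| "unary_poly mul Scale_square p x = mul p (mul x x)"

fun unary_poly_trm :: "unary_shape \<Rightarrow> 'v \<Rightarrow> 'v trm \<Rightarrow> 'v trm" where
  "unary_poly_trm Ident v t = t"
| "unary_poly_trm Scale v t = TMul (Var v) t"
| "unary_poly_trm Square v t = TMul t t"
| "unary_poly_trm Scale_square v t = TMul (Var v) (TMul t t)"

lemma eval_unary_poly_trm [simp]:
  "eval add mul \<rho> (unary_poly_trm f v t) = unary_poly mul f (\<rho> v) (eval add mul \<rho> t)"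
  by (cases f) simp_all

lemma mul7_commute: "mul7 x y = mul7 y x"
  by (cases x; cases y) simp_all

lemma mul7_cube: "mul7 (mul7 x x) x = mul7 x x"
  by (cases x) simp_all

lemma mul7_add_product: "mul7 (add7 x (mul7 x y)) (mul7 x y) = mul7 (mul7 x y) (mul7 x y)"
  by (cases x; cases y) (simp_all add: add7_def)

lemma add7_below_transfer:
  "add7 (unary_poly mul7 f r y) (add7 (unary_poly mul7 f r x) (unary_poly mul7 g p (add7 x y))) =
   add7 (unary_poly mul7 f r x) (unary_poly mul7 g p (add7 x y))"
  by (cases f; cases g; cases x; cases y; cases p; cases r) (simp_all add: add7_def)

lemma has_sub_S7I:
  assumes "inj f"
    and "\<And>x y. f (add7 x y) = add (f x) (f y)"
    and "\<And>x y. f (mul7 x y) = mul (f x) (f y)"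
  shows "has_sub_S7 add mul"
  unfolding has_sub_S7_def
proof (intro exI conjI allI)
  show "subsemiring add mul (range f)"
    unfolding subsemiring_def using assms(2,3) by (auto simp: image_iff) (metis rangeI)+
  show "bij_betw f UNIV (range f)"
    using assms(1) by (simp add: bij_betw_def)
qed (use assms(2,3) in auto)

locale V_S7 =
  fixes add mul :: "'a \<Rightarrow> 'a \<Rightarrow> 'a"
  assumes in_V_S7: "in_V_S7 add mul"
begin

lemma S7_law: "satisfies add7 mul7 t u \<Longrightarrow> eval add mul \<rho> t = eval add mul \<rho> u"
  using in_V_S7 unfolding in_V_S7_def satisfies_def by blast

lemma ai_semiring: "ai_semiring add mul"
  using in_V_S7 by (simp add: in_V_S7_def)

lemma distrib_left: "mul x (add y z) = add (mul x y) (mul x z)"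
  and distrib_right: "mul (add x y) z = add (mul x z) (mul y z)"
  using ai_semiring unfolding ai_semiring_def by blast+

lemma mul_commute: "mul x y = mul y x"
proof -
  have "satisfies add7 mul7 (TMul (Var 0) (Var 1)) (TMul (Var 1) (Var 0))"
    by (simp add: satisfies_def mul7_commute)
  from S7_law[OF this, of "\<lambda>n. if n = 0 then x else y"] show ?thesis by simp
qed

sublocale add: semilattice add
  using ai_semiring unfolding ai_semiring_def by unfold_locales blast+

sublocale mul: abel_semigroup mul
  using ai_semiring mul_commute unfolding ai_semiring_def by unfold_locales blast+

lemma mul_cube: "mul (mul x x) x = mul x x"
proof -
  have "satisfies add7 mul7 (TMul (TMul (Var 0) (Var 0)) (Var 0)) (TMul (Var 0) (Var 0))"
    by (simp add: satisfies_def mul7_cube)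
  from S7_law[OF this, of "\<lambda>_. x"] show ?thesis by simp
qed

lemma square_idempotent: "mul (mul x x) (mul x x) = mul x x"
  by (metis mul_cube mul.assoc)

lemma mul_add_product: "mul (add x (mul x y)) (mul x y) = mul (mul x y) (mul x y)"
proof -
  have "satisfies add7 mul7
      (TMul (TAdd (Var 0) (TMul (Var 0) (Var 1))) (TMul (Var 0) (Var 1)))
      (TMul (TMul (Var 0) (Var 1)) (TMul (Var 0) (Var 1)))"
    by (simp add: satisfies_def mul7_add_product)
  from S7_law[OF this, of "\<lambda>n. if n = 0 then x else y"] show ?thesis by simp
qed

lemma add_below_iff: "add (add u v) c = c \<longleftrightarrow> add u c = c \<and> add v c = c"
  by (metis add.assoc add.commute add.left_idem)

lemma below_transfer:
  assumes "add (unary_poly mul g p (add x y)) c = c" and "add (unary_poly mul f r x) c = c"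
  shows "add (unary_poly mul f r y) c = c"
proof -
  let ?t = "TAdd (unary_poly_trm f 3 (Var 0)) (unary_poly_trm g 2 (TAdd (Var 0) (Var 1)))"
  have "satisfies add7 mul7 (TAdd (unary_poly_trm f 3 (Var 1)) ?t) ?t"
    by (simp add: satisfies_def add7_below_transfer)
  from S7_law[OF this, of "\<lambda>n. if n = 0 then x else if n = 1 then y else if n = 2 then p else r"]
  have "add (unary_poly mul f r y) (add (unary_poly mul f r x) (unary_poly mul g p (add x y))) =
        add (unary_poly mul f r x) (unary_poly mul g p (add x y))"
    by simp
  then show ?thesis
    using assms add_below_iff by metis
qed

definition sep :: "'a \<Rightarrow> 'a rel" where
  "sep c = {(x, y). \<forall>f p. add (unary_poly mul f p x) c = c \<longleftrightarrow> add (unary_poly mul f p y) c = c}"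

lemma equiv_sep: "equiv UNIV (sep c)"
  unfolding equiv_def refl_on_def sym_def trans_def sep_def by auto

lemma sep_if_sum_below:
  assumes "add (unary_poly mul g p (add x y)) c = c"
  shows "(x, y) \<in> sep c"
  using below_transfer[OF assms] below_transfer[of g p y x] assms
  unfolding sep_def by (auto simp: add.commute)

lemma unary_poly_mul_right:
  obtains g q where "\<And>x. unary_poly mul f p (mul x w) = unary_poly mul g q x"
proof (cases f)
  case Ident
  then show ?thesis using that[of Scale w] by (simp add: mul.commute)
next
  case Scale
  then show ?thesis
    using that[of Scale "mul p w"] by (simp add: mul.assoc mul.commute mul.left_commute)
next
  case Square
  then show ?thesis
    using that[of Scale_square "mul w w"] by (simp add: mul.assoc mul.commute mul.left_commute)
next
  case Scale_square
  then show ?thesis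
    using that[of Scale_square "mul p (mul w w)"]
    by (simp add: mul.assoc mul.commute mul.left_commute)
qed

lemma sep_mul_right: "(x, y) \<in> sep c \<Longrightarrow> (mul x w, mul y w) \<in> sep c"
  unfolding sep_def
proof (clarsimp)
  fix f p assume sep: "\<forall>f p. add (unary_poly mul f p x) c = c \<longleftrightarrow> add (unary_poly mul f p y) c = c"
  obtain g q where "\<And>x. unary_poly mul f p (mul x w) = unary_poly mul g q x"
    using unary_poly_mul_right[of f p w] by blast
  then show "add (unary_poly mul f p (mul x w)) c = c \<longleftrightarrow> add (unary_poly mul f p (mul y w)) c = c"
    using sep by simp
qed

lemma square_add: "mul (add u w) (add u w) = add (mul u u) (add (mul w u) (mul w w))"
  by (simp add: distrib_left distrib_right mul.commute add.assoc add.commute add.left_commute)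

lemma sep_add_right: "(x, y) \<in> sep c \<Longrightarrow> (add x w, add y w) \<in> sep c"
  unfolding sep_def
proof (clarsimp)
  fix f p assume sep: "\<forall>f p. add (unary_poly mul f p x) c = c \<longleftrightarrow> add (unary_poly mul f p y) c = c"
  show "add (unary_poly mul f p (add x w)) c = c \<longleftrightarrow> add (unary_poly mul f p (add y w)) c = c"
  proof (cases f)
    case Ident
    then show ?thesis using sep[rule_format, of Ident] by (simp add: add_below_iff)
  next
    case Scale
    then show ?thesis using sep[rule_format, of Scale p] by (simp add: add_below_iff distrib_left)
  next
    case Square
    then show ?thesis using sep[rule_format, of Square] sep[rule_format, of Scale w]
      by (simp add: add_below_iff square_add)
  next
    case Scale_square
    then show ?thesis
      using sep[rule_format, of Scale_square p] sep[rule_format, of Scale "mul p w"]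
      by (simp add: add_below_iff square_add distrib_left mul.assoc mul.commute mul.left_commute)
  qed
qed

lemma congruence_sep: "congruence add mul (sep c)"
  unfolding congruence_def
proof (intro conjI allI impI equiv_sep)
  have trans: "trans (sep c)"
    using equiv_sep unfolding equiv_def by blast
  fix a b a' b' assume ab: "(a, b) \<in> sep c" and ab': "(a', b') \<in> sep c"
  show "(add a a', add b b') \<in> sep c"
    using trans sep_add_right[OF ab, of a'] sep_add_right[OF ab', of b]
    by (metis add.commute transD)
  show "(mul a a', mul b b') \<in> sep c"
    using trans sep_mul_right[OF ab, of a'] sep_mul_right[OF ab', of b]
    by (metis mul.commute transD)
qed

lemma ex_sep_eq_Id:
  assumes "subdirectly_irreducible add mul"
  shows "\<exists>c. sep c = Id"
proof (rule ccontr)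
  assume no_Id: "\<nexists>c. sep c = Id"
  obtain M where "congruence add mul M" "M \<noteq> Id"
    and monolith: "\<And>R. congruence add mul R \<and> R \<noteq> Id \<Longrightarrow> M \<subseteq> R"
    using assms unfolding subdirectly_irreducible_def by blast
  then obtain x y where xy: "(x, y) \<in> M" "x \<noteq> y"
    unfolding congruence_def equiv_def refl_on_def by auto
  have "M \<subseteq> sep c" for c
    using monolith congruence_sep no_Id by blast
  with xy(1) have "(x, y) \<in> sep x" "(x, y) \<in> sep y"
    by blast+
  then have "add y x = x" "add x y = y"
    unfolding sep_def by (force dest: spec[of _ Ident])+
  with xy(2) show False
    by (simp add: add.commute)
qed

end

locale V_S7_separated = V_S7 +
  fixes c :: 'a
  assumes sep_c: "sep c = Id"
    and nontrivial: "\<exists>x y :: 'a. x \<noteq> y"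
begin

definition zero :: 'a where
  "zero = (THE w. \<forall>f p. add (unary_poly mul f p w) c \<noteq> c)"

lemma sum_of_distinct_not_below: "x \<noteq> y \<Longrightarrow> add (unary_poly mul f p (add x y)) c \<noteq> c"
  using sep_if_sum_below sep_c by blast

lemma not_below_iff_zero: "(\<forall>f p. add (unary_poly mul f p w) c \<noteq> c) \<longleftrightarrow> w = zero"
proof -
  have "\<exists>!w. \<forall>f p. add (unary_poly mul f p w) c \<noteq> c"
  proof (rule ex_ex1I)
    show "\<exists>w. \<forall>f p. add (unary_poly mul f p w) c \<noteq> c"
      using nontrivial sum_of_distinct_not_below by blast
    fix w w'
    assume "\<forall>f p. add (unary_poly mul f p w) c \<noteq> c" and "\<forall>f p. add (unary_poly mul f p w') c \<noteq> c"
    then have "(w, w') \<in> sep c" by (simp add: sep_def)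
    then show "w = w'" using sep_c by blast
  qed
  moreover from this have "\<forall>f p. add (unary_poly mul f p zero) c \<noteq> c"
    unfolding zero_def by (rule theI')
  ultimately show ?thesis
    by blast
qed

lemma add_distinct: "x \<noteq> y \<Longrightarrow> add x y = zero"
  using not_below_iff_zero[of "add x y"] sum_of_distinct_not_below by blast

lemma mul_zero_left: "mul zero w = zero"
proof -
  have "add (unary_poly mul f p (mul zero w)) c \<noteq> c" for f p
  proof -
    obtain g q where "\<And>x. unary_poly mul f p (mul x w) = unary_poly mul g q x"
      using unary_poly_mul_right[of f p w] by blast
    then show ?thesis using not_below_iff_zero[of zero] by simp
  qed
  then show ?thesis using not_below_iff_zero[of "mul zero w"] by blast
qed

lemma mul_zero_right: "mul w zero = zero"
  using mul_zero_left mul.commute by metis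

lemma flat_semiring_zero: "flat_semiring add mul zero"
  unfolding flat_semiring_def mult_zero_def
  using ai_semiring add_distinct mul_zero_left mul_zero_right by blast

lemma c_ne_zero: "c \<noteq> zero"
  using not_below_iff_zero[of c] by (metis unary_poly.simps(1) add.idem)

lemma below_c_imp_eq: "add x c = c \<Longrightarrow> x = c"
  using add_distinct c_ne_zero by metis

lemma nonzero_divides_c: "x \<noteq> zero \<Longrightarrow> x = c \<or> (\<exists>t. mul t x = c)"
proof -
  assume "x \<noteq> zero"
  then obtain f p where "add (unary_poly mul f p x) c = c"
    using not_below_iff_zero by blast
  then have "unary_poly mul f p x = c"
    by (rule below_c_imp_eq)
  then show ?thesis
    by (cases f) (auto simp: mul.assoc [symmetric])
qed

lemma idempotent_factor:
  assumes "mul s t = e" and "mul e e = e" and "e \<noteq> zero"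
  shows "s = e"
proof (rule ccontr)
  assume "s \<noteq> e"
  have "mul (add s e) e = e"
    using mul_add_product[of s t] assms(1,2) by simp
  with \<open>s \<noteq> e\<close> assms(3) show False
    by (simp add: add_distinct mul_zero_left)
qed

lemma mul_c_cases: "mul s c \<in> {zero, c}"
proof (rule ccontr)
  assume sc: "mul s c \<notin> {zero, c}"
  then obtain t where "mul t (mul s c) = c"
    using nonzero_divides_c by blast
  then have tsc: "mul (mul t s) c = c"
    by (simp add: mul.assoc)
  define e where "e = mul (mul t s) (mul t s)"
  have e_idem: "mul e e = e"
    unfolding e_def by (rule square_idempotent)
  have ec: "mul e c = c"
    unfolding e_def using tsc by (simp add: mul.assoc)
  then have "e \<noteq> zero"
    using c_ne_zero mul_zero_left by auto
  moreover have "mul s (mul t (mul t s)) = e"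
    unfolding e_def by (simp add: mul.assoc mul.commute mul.left_commute)
  ultimately have "s = e"
    using idempotent_factor e_idem by blast
  with sc ec show False by simp
qed

lemma mult_ideal_zero_c: "mult_ideal mul {zero, c}"
  unfolding mult_ideal_def
  using mul_c_cases mul_zero_left mul_zero_right by (auto simp: mul.commute)

lemma mult_ideal_least:
  assumes "mult_ideal mul J" and "J \<noteq> {zero}"
  shows "{zero, c} \<subseteq> J"
proof -
  have closed: "\<And>s j. j \<in> J \<Longrightarrow> mul s j \<in> J"
    using assms(1) unfolding mult_ideal_def by blast
  obtain j where "j \<in> J"
    using assms(1) unfolding mult_ideal_def by blast
  then have "zero \<in> J"
    using closed[of j zero] by (simp add: mul_zero_left)
  then obtain x where "x \<in> J" "x \<noteq> zero"
    using assms(2) by blast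
  then have "c \<in> J"
    using nonzero_divides_c closed by blast
  with \<open>zero \<in> J\<close> show ?thesis by simp
qed

lemma idempotent_absorbs_c:
  assumes "mul e e = e" and "e \<noteq> zero"
  shows "mul e c = c"
  using nonzero_divides_c[OF assms(2)] assms(1) by (metis mul.assoc mul.commute)

lemma nonzero_idempotent_unique:
  assumes "mul e e = e" "e \<noteq> zero" "mul e' e' = e'" "e' \<noteq> zero"
  shows "e = e'"
proof (rule ccontr)
  assume "e \<noteq> e'"
  have "mul (add e e') c = c"
    using idempotent_absorbs_c assms by (simp add: distrib_right)
  with \<open>e \<noteq> e'\<close> show False
    using add_distinct mul_zero_left c_ne_zero by simp
qed

lemma idempotents_eq_zero:
  assumes "\<forall>e. mul e e = e \<longrightarrow> e = zero"
  shows "idempotents mul = {zero}"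
  using assms mul_zero_left unfolding idempotents_def by blast

lemma in_N_if_no_nonzero_idempotent:
  assumes "\<forall>e. mul e e = e \<longrightarrow> e = zero"
  shows "in_N add mul"
  unfolding in_N_def
proof (intro conjI allI in_V_S7)
  fix x y
  have "mul x x = zero"
    using assms square_idempotent by blast
  then show "mul (mul x x) y = mul x x"
    by (simp add: mul_zero_left)
qed

lemma idempotents_eq:
  assumes "mul e e = e" and "e \<noteq> zero"
  shows "idempotents mul = {zero, e}"
  using assms nonzero_idempotent_unique[OF assms] mul_zero_left
  unfolding idempotents_def by blast

lemma elements_if_c_idempotent:
  assumes "mul c c = c"
  shows "x = zero \<or> x = c"
proof (rule ccontr)
  assume "\<not> (x = zero \<or> x = c)"
  then obtain t where "mul x t = c"
    using nonzero_divides_c mul.commute by metis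
  then have "x = c"
    using idempotent_factor assms c_ne_zero by blast
  with \<open>\<not> (x = zero \<or> x = c)\<close> show False by simp
qed

lemma isomorphic_M2_if_c_idempotent:
  assumes "mul c c = c"
  shows "isomorphic add mul addM2 mulM2"
  unfolding isomorphic_def
proof (intro exI conjI)
  have elements: "\<And>x. x = zero \<or> x = c"
    by (rule elements_if_c_idempotent[OF assms])
  show "bij (\<lambda>x. x = c)"
    unfolding bij_def inj_def surj_def
  proof (intro conjI allI impI)
    show "x = y" if "(x = c) = (y = c)" for x y
      using that elements[of x] elements[of y] by blast
    show "\<exists>x. b = (x = c)" for b
      using c_ne_zero by (intro exI[of _ "if b then c else zero"]) simp
  qed
  have zc: "add zero c = zero" "add c zero = zero"
    using add_distinct c_ne_zero by auto
  show "is_hom add mul addM2 mulM2 (\<lambda>x. x = c)"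
    unfolding is_hom_def addM2_def mulM2_def
  proof (intro allI)
    fix x y
    from elements[of x] elements[of y]
    show "(add x y = c) = (if (x = c) = (y = c) then x = c else False) \<and>
        (mul x y = c) = (x = c \<and> y = c)"
      by (elim disjE) (simp_all add: zc assms c_ne_zero add.idem mul_zero_left mul_zero_right)
  qed
qed

lemma has_sub_S7_if_idempotent_ne_c:
  assumes "mul e e = e" and "e \<noteq> zero" and "e \<noteq> c"
  shows "has_sub_S7 add mul"
proof -
  have "mul c c \<noteq> c"
    using nonzero_idempotent_unique assms c_ne_zero by blast
  then have cc: "mul c c = zero"
    using mul_c_cases[of c] by simp
  have ec: "mul e c = c" and ce: "mul c e = c"
    using idempotent_absorbs_c[OF assms(1,2)] mul.commute by metis+
  define f where "f x = (case x of Infty \<Rightarrow> zero | A \<Rightarrow> c | One \<Rightarrow> e)" for x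
  show ?thesis
  proof (rule has_sub_S7I)
    show "inj f"
      unfolding inj_def f_def using assms(2,3) c_ne_zero by (auto split: s7.splits)
    show "f (add7 x y) = add (f x) (f y)" for x y
      using assms(2,3) c_ne_zero
      by (cases x; cases y) (auto simp: f_def add7_def add_distinct)
    show "f (mul7 x y) = mul (f x) (f y)" for x y
      by (cases x; cases y)
        (simp_all add: f_def cc ec ce assms(1) mul_zero_left mul_zero_right)
  qed
qed

end

theorem theorem3p6:
  fixes add mul :: "'a \<Rightarrow> 'a \<Rightarrow> 'a"
  assumes "in_V_S7 add mul"
    and "subdirectly_irreducible add mul"
  shows "\<exists>z. flat_semiring add mul z \<and>
           (\<exists>I. mult_ideal mul I \<and> I \<noteq> {z} \<and>
                (\<forall>J. mult_ideal mul J \<and> J \<noteq> {z} \<longrightarrow> I \<subseteq> J) \<and>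
                card I = 2) \<and>
           finite (idempotents mul) \<and> card (idempotents mul) \<le> 2 \<and>
           (card (idempotents mul) = 1 \<longrightarrow> in_N add mul) \<and>
           (card (idempotents mul) = 2 \<longrightarrow>
              isomorphic add mul addM2 mulM2 \<or> has_sub_S7 add mul)"
proof -
  interpret V_S7 add mul
    using assms(1) by unfold_locales
  obtain c where "sep c = Id"
    using ex_sep_eq_Id assms(2) by blast
  then interpret V_S7_separated add mul c
    using assms(2) by unfold_locales (simp_all add: subdirectly_irreducible_def)
  have least_ideal: "\<exists>I. mult_ideal mul I \<and> I \<noteq> {zero} \<and>
      (\<forall>J. mult_ideal mul J \<and> J \<noteq> {zero} \<longrightarrow> I \<subseteq> J) \<and> card I = 2"
    using mult_ideal_zero_c mult_ideal_least c_ne_zero by (intro exI[of _ "{zero, c}"]) simp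
  consider (none) "\<forall>e. mul e e = e \<longrightarrow> e = zero" | (some) e where "mul e e = e" "e \<noteq> zero"
    by blast
  then show ?thesis
  proof cases
    case none
    then have "idempotents mul = {zero}" "in_N add mul"
      by (rule idempotents_eq_zero, rule in_N_if_no_nonzero_idempotent)
    with flat_semiring_zero least_ideal show ?thesis
      by (intro exI[of _ zero]) simp
  next
    case some
    then have "idempotents mul = {zero, e}" "card {zero, e} = 2"
      by (simp_all add: idempotents_eq)
    moreover have "isomorphic add mul addM2 mulM2 \<or> has_sub_S7 add mul"
      using some isomorphic_M2_if_c_idempotent has_sub_S7_if_idempotent_ne_c
      by (cases "e = c") simp_all
    ultimately show ?thesis
      using flat_semiring_zero least_ideal by (intro exI[of _ zero]) simp
  qed
qed

end
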